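(* There is a function $h:\mathbb{N}^2\to\mathbb{N}$ such that for any $k,t\in\mathbb{N}$ the following holds: if $G$ is a graph that does not contain a half-graph of order $t$ as a semi-induced subgraph, and $u$ and $v$ are vertices in the same connected component of the $k$-near-twin graph $NT_k(G)$, then $u$ and $v$ are $h(k,t)$-near-twins in $G$.
   Context: $N^G(v)$ denotes the set of neighbors of $v$ in $G$. Two vertices $u,v$ are $k$-near-twins in $G$ if $|N^G(u)\,\Delta\,N^G(v)|\le k$. The $k$-near-twin graph $NT_k(G)$ has vertex set $V(G)$, with $u,v$ adjacent iff they are $k$-near-twins in $G$. $G$ contains a half-graph of order $t$ as a semi-induced subgraph if there are distinct vertices $u_1,\dots,u_t,w_1,\dots,w_t$ of $G$ such that $u_iw_j\in E(G)$ iff $i\le j$ (edges among the $u_i$'s and among the $w_j$'s are arbitrary). *)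

theory Defs
  imports Main
begin

definition simple_graph :: "'a set \<Rightarrow> ('a \<Rightarrow> 'a \<Rightarrow> bool) \<Rightarrow> bool" where
  "simple_graph V E \<longleftrightarrow> finite V \<and> (\<forall>x y. E x y \<longrightarrow> x \<in> V \<and> y \<in> V)
     \<and> (\<forall>x y. E x y \<longrightarrow> E y x) \<and> (\<forall>x. \<not> E x x)"

definition nbhd :: "'a set \<Rightarrow> ('a \<Rightarrow> 'a \<Rightarrow> bool) \<Rightarrow> 'a \<Rightarrow> 'a set" where
  "nbhd V E v = {w \<in> V. E v w}"

definition near_twins :: "nat \<Rightarrow> 'a set \<Rightarrow> ('a \<Rightarrow> 'a \<Rightarrow> bool) \<Rightarrow> 'a \<Rightarrow> 'a \<Rightarrow> bool" where
  "near_twins k V E u v \<longleftrightarrow>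
     card ((nbhd V E u - nbhd V E v) \<union> (nbhd V E v - nbhd V E u)) \<le> k"

definition NT_adj :: "nat \<Rightarrow> 'a set \<Rightarrow> ('a \<Rightarrow> 'a \<Rightarrow> bool) \<Rightarrow> 'a \<Rightarrow> 'a \<Rightarrow> bool" where
  "NT_adj k V E x y \<longleftrightarrow> x \<in> V \<and> y \<in> V \<and> x \<noteq> y \<and> near_twins k V E x y"

definition same_NT_component :: "nat \<Rightarrow> 'a set \<Rightarrow> ('a \<Rightarrow> 'a \<Rightarrow> bool) \<Rightarrow> 'a \<Rightarrow> 'a \<Rightarrow> bool" where
  "same_NT_component k V E u v \<longleftrightarrow> u \<in> V \<and> v \<in> V \<and> (NT_adj k V E)\<^sup>*\<^sup>* u v"

definition has_semi_induced_half_graph :: "'a set \<Rightarrow> ('a \<Rightarrow> 'a \<Rightarrow> bool) \<Rightarrow> nat \<Rightarrow> bool" where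
  "has_semi_induced_half_graph V E t \<longleftrightarrow>
     (\<exists>u w :: nat \<Rightarrow> 'a.
        u ` {1..t} \<subseteq> V \<and> w ` {1..t} \<subseteq> V \<and>
        inj_on u {1..t} \<and> inj_on w {1..t} \<and> u ` {1..t} \<inter> w ` {1..t} = {} \<and>
        (\<forall>i\<in>{1..t}. \<forall>j\<in>{1..t}. E (u i) (w j) \<longleftrightarrow> i \<le> j))"

end

theory Submission
  imports Defs
begin

text \<open>
Let X = N(u) - N(v) and follow a walk from u to v in NT_k(G). Along the walk the number of
neighbours in X falls from |X| to 0, changing by at most k per step. Let c be the vertex right
after the last one with more than L(t) neighbours in X: then X' = N(c) \<inter> X has more than
L(t) - k elements, and every later vertex of the walk has at most L(t) neighbours in X. Recursing
on the rest of the walk with X' in place of X yields a half-graph of order t - 1 whose rows have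
few neighbours in X'. As X' is large, some e \<in> X' avoids all these rows and their neighbourhoods;
then c, adjacent to all of X', as a new first row and e as a new first column give a half-graph of
order t. Hence |N(u) - N(v)| \<le> L(t), and symmetrically |N(v) - N(u)| \<le> L(t).
\<close>

text \<open>As |X'| > L(t+1) - k, this makes |X'| exceed both L(t), to recurse, and t L(t) + t, to find e.\<close>
fun ladder_threshold :: "nat \<Rightarrow> nat \<Rightarrow> nat" where
  "ladder_threshold k 0 = 0"
| "ladder_threshold k (Suc t) = Suc t * Suc (ladder_threshold k t) + k"

definition prepend :: "'a \<Rightarrow> (nat \<Rightarrow> 'a) \<Rightarrow> nat \<Rightarrow> 'a" where
  "prepend x f i = (if i = 1 then x else f (i - 1))"

lemma prepend_1 [simp]: "prepend x f (Suc 0) = x"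
  by (simp add: prepend_def)

lemma prepend_Suc [simp]: "0 < i \<Longrightarrow> prepend x f (Suc i) = f i"
  by (simp add: prepend_def)

lemma ball_atLeastAtMost_Suc:
  "(\<forall>i\<in>{1..Suc t}. P i) \<longleftrightarrow> P 1 \<and> (\<forall>i\<in>{1..t}. P (Suc i))"
proof
  assume "P 1 \<and> (\<forall>i\<in>{1..t}. P (Suc i))"
  moreover have "i = 1 \<or> (\<exists>j\<in>{1..t}. i = Suc j)" if "i \<in> {1..Suc t}" for i
    using that by (cases i) auto
  ultimately show "\<forall>i\<in>{1..Suc t}. P i"
    by fastforce
qed simp

definition ladder :: "('a \<Rightarrow> 'a set) \<Rightarrow> nat \<Rightarrow> (nat \<Rightarrow> 'a) \<Rightarrow> (nat \<Rightarrow> 'a) \<Rightarrow> bool" where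
  "ladder N t r c \<longleftrightarrow> (\<forall>i\<in>{1..t}. \<forall>j\<in>{1..t}. c j \<noteq> r i \<and> (c j \<in> N (r i) \<longleftrightarrow> i \<le> j))"

lemma ladder_prepend:
  assumes "ladder N t r c" "\<forall>j\<in>{1..t}. c j \<in> N x" "x \<notin> N x" "e \<in> N x"
    "\<forall>i\<in>{1..t}. e \<notin> N (r i) \<and> e \<noteq> r i"
  shows "ladder N (Suc t) (prepend x r) (prepend e c)"
  using assms unfolding ladder_def ball_atLeastAtMost_Suc
  by (simp add: less_Suc_eq_le) blast

lemma has_semi_induced_half_graph_if_ladder:
  assumes ladder: "ladder (nbhd V E) t r c" and V: "r ` {1..t} \<subseteq> V" "c ` {1..t} \<subseteq> V"
  shows "has_semi_induced_half_graph V E t"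
proof -
  have adj: "E (r i) (c j) \<longleftrightarrow> i \<le> j" if "i \<in> {1..t}" "j \<in> {1..t}" for i j
    using ladder V that unfolding ladder_def nbhd_def by blast
  have inj_r: "inj_on r {1..t}"
  proof (rule linorder_inj_onI')
    fix i j assume "i \<in> {1..t}" "j \<in> {1..t}" "i < j"
    then show "r i \<noteq> r j" using adj[of i i] adj[of j i] by auto
  qed
  have inj_c: "inj_on c {1..t}"
  proof (rule linorder_inj_onI')
    fix i j assume "i \<in> {1..t}" "j \<in> {1..t}" "i < j"
    then show "c i \<noteq> c j" using adj[of j j] adj[of j i] by auto
  qed
  have disjoint: "r ` {1..t} \<inter> c ` {1..t} = {}"
    using ladder unfolding ladder_def by (fastforce simp: disjoint_iff)
  show ?thesis
    unfolding has_semi_induced_half_graph_def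
    by (intro exI[of _ r] exI[of _ c] conjI V inj_r inj_c disjoint ballI adj)
qed

lemma rtranclp_last_exit:
  assumes "R\<^sup>*\<^sup>* a b" "\<not> Q a" "Q b"
  shows "\<exists>d c. R d c \<and> \<not> Q d \<and> Q c \<and> (\<lambda>x y. R x y \<and> Q x \<and> Q y)\<^sup>*\<^sup>* c b"
  using assms(1,3)
proof (induction rule: rtranclp_induct)
  case base
  with assms(2) show ?case by simp
next
  case (step y z)
  show ?case
  proof (cases "Q y")
    case True
    with step obtain d c where "R d c" "\<not> Q d" "Q c" "(\<lambda>x y. R x y \<and> Q x \<and> Q y)\<^sup>*\<^sup>* c y"
      by blast
    with step True show ?thesis
      by (metis (mono_tags, lifting) rtranclp.rtrancl_into_rtrancl)
  next
    case False
    with step show ?thesis by blast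
  qed
qed

lemma rtranclp_restrictD:
  assumes "(\<lambda>x y. R x y \<and> Q x \<and> Q y)\<^sup>*\<^sup>* a b" "Q b"
  shows "Q a \<and> R\<^sup>*\<^sup>* a b"
  using assms by (induction rule: converse_rtranclp_induct) (auto intro: converse_rtranclp_into_rtranclp)

lemma card_Int_le_card_Int_add_sym_diff:
  assumes "finite A" "finite B"
  shows "card (A \<inter> X) \<le> card (B \<inter> X) + card (sym_diff A B)"
proof -
  have "card (A \<inter> X) \<le> card ((B \<inter> X) \<union> sym_diff A B)"
    by (rule card_mono) (use assms in auto)
  also have "\<dots> \<le> card (B \<inter> X) + card (sym_diff A B)"
    by (rule card_Un_le)
  finally show ?thesis .
qed

lemma ex_avoiding_small_neighbourhoods:
  assumes "finite I" "\<forall>i\<in>I. card (N (r i) \<inter> X) \<le> L" "card I * L + card I < card X"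
  shows "\<exists>e\<in>X. \<forall>i\<in>I. e \<notin> N (r i) \<and> e \<noteq> r i"
proof -
  define B where "B = (\<Union>i\<in>I. N (r i) \<inter> X) \<union> r ` I"
  have "finite X" using assms(3) card.infinite by fastforce
  then have "finite B" using assms(1) by (auto simp: B_def)
  have "card (\<Union>i\<in>I. N (r i) \<inter> X) \<le> (\<Sum>i\<in>I. card (N (r i) \<inter> X))"
    by (rule card_UN_le) (rule assms(1))
  also have "\<dots> \<le> card I * L"
    using sum_bounded_above[of I "\<lambda>i. card (N (r i) \<inter> X)" L] assms(2) by simp
  finally have "card B \<le> card I * L + card I"
    using card_Un_le[of "\<Union>i\<in>I. N (r i) \<inter> X" "r ` I"] card_image_le[OF assms(1), of r]
    unfolding B_def by linarith
  with assms(3) have "\<not> X \<subseteq> B"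
    using card_mono[OF \<open>finite B\<close>, of X] by linarith
  then show ?thesis unfolding B_def by blast
qed

lemma last_large_intersection_on_walk:
  assumes finite: "\<And>x. finite (N x)" and step: "\<And>x y. R x y \<Longrightarrow> card (sym_diff (N x) (N y)) \<le> k"
    and "R\<^sup>*\<^sup>* a b" "X \<subseteq> N a" "X \<inter> N b = {}" "L < card X"
  obtains d c where "R d c" "L < card (N c \<inter> X) + k" "card (N c \<inter> X) \<le> L"
    "(\<lambda>x y. R x y \<and> card (N x \<inter> X) \<le> L \<and> card (N y \<inter> X) \<le> L)\<^sup>*\<^sup>* c b"
proof -
  have "\<not> card (N a \<inter> X) \<le> L"
    using assms(4,6) by (simp add: Int_absorb1)
  moreover have "card (N b \<inter> X) \<le> L"
    using assms(5) by (simp add: Int_commute)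
  ultimately obtain d c where "R d c" "\<not> card (N d \<inter> X) \<le> L" "card (N c \<inter> X) \<le> L"
    and "(\<lambda>x y. R x y \<and> card (N x \<inter> X) \<le> L \<and> card (N y \<inter> X) \<le> L)\<^sup>*\<^sup>* c b"
    using rtranclp_last_exit[OF assms(3), of "\<lambda>x. card (N x \<inter> X) \<le> L"] by blast
  moreover have "card (N d \<inter> X) \<le> card (N c \<inter> X) + k"
    using card_Int_le_card_Int_add_sym_diff[OF finite[of d] finite[of c], of X] step[OF \<open>R d c\<close>]
    by linarith
  ultimately show ?thesis
    using that by simp
qed

lemma ladder_along_walk:
  fixes N :: "'a \<Rightarrow> 'a set"
  assumes finite: "\<And>x. finite (N x)" and irrefl: "\<And>x. x \<notin> N x"
    and "\<And>x y. R x y \<Longrightarrow> card (sym_diff (N x) (N y)) \<le> k" "\<And>x y. R x y \<Longrightarrow> y \<in> V"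
    and "R\<^sup>*\<^sup>* a b" "X \<subseteq> N a" "X \<inter> N b = {}" "ladder_threshold k t < card X"
  shows "\<exists>r c. (\<forall>i\<in>{1..t}. r i \<in> V \<and> R\<^sup>*\<^sup>* (r i) b \<and> card (N (r i) \<inter> X) \<le> ladder_threshold k t)
    \<and> (\<forall>j\<in>{1..t}. c j \<in> X) \<and> ladder N t r c"
  using assms(3-)
proof (induction t arbitrary: R a X)
  case 0
  show ?case by (simp add: ladder_def)
next
  case (Suc t)
  define L where "L = ladder_threshold k t"
  define Q where "Q x \<longleftrightarrow> card (N x \<inter> X) \<le> ladder_threshold k (Suc t)" for x
  define R' where "R' x y \<longleftrightarrow> R x y \<and> Q x \<and> Q y" for x y
  obtain d c where "R d c" "Q c" and walk_c: "R'\<^sup>*\<^sup>* c b"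
    and "ladder_threshold k (Suc t) < card (N c \<inter> X) + k"
    using last_large_intersection_on_walk[OF finite Suc.prems(1,3-6)] unfolding Q_def R'_def .
  moreover define X' where "X' = N c \<inter> X"
  ultimately have X'_large: "Suc t * Suc L < card X'"
    by (simp add: L_def)
  have "\<exists>r cs. (\<forall>i\<in>{1..t}. r i \<in> V \<and> R'\<^sup>*\<^sup>* (r i) b \<and> card (N (r i) \<inter> X') \<le> L)
    \<and> (\<forall>j\<in>{1..t}. cs j \<in> X') \<and> ladder N t r cs"
    unfolding L_def
  proof (rule Suc.IH)
    show "card (sym_diff (N x) (N y)) \<le> k" "y \<in> V" if "R' x y" for x y
      using that Suc.prems(1,2) by (auto simp: R'_def)
    show "X' \<subseteq> N c" "X' \<inter> N b = {}"
      using Suc.prems(5) by (auto simp: X'_def)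
    show "ladder_threshold k t < card X'"
      using X'_large by (simp add: L_def)
  qed (fact walk_c)
  then obtain r cs where r: "\<forall>i\<in>{1..t}. r i \<in> V \<and> R'\<^sup>*\<^sup>* (r i) b \<and> card (N (r i) \<inter> X') \<le> L"
    and cs: "\<forall>j\<in>{1..t}. cs j \<in> X'" and "ladder N t r cs"
    by blast
  have "Q b"
    using Suc.prems(5) by (simp add: Q_def Int_commute)
  then have r_Q: "\<forall>i\<in>{1..t}. Q (r i) \<and> R\<^sup>*\<^sup>* (r i) b" and "R\<^sup>*\<^sup>* c b"
    using r walk_c rtranclp_restrictD[of R Q _ b] unfolding R'_def by blast+
  obtain e where "e \<in> X'" and e: "\<forall>i\<in>{1..t}. e \<notin> N (r i) \<and> e \<noteq> r i"
    using ex_avoiding_small_neighbourhoods[of "{1..t}" N r X' L] r X'_large by auto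
  show ?case
  proof (intro exI conjI)
    show "ladder N (Suc t) (prepend c r) (prepend e cs)"
      using ladder_prepend[OF \<open>ladder N t r cs\<close> _ irrefl _ e] cs \<open>e \<in> X'\<close> by (simp add: X'_def)
    show "\<forall>i\<in>{1..Suc t}. prepend c r i \<in> V \<and> R\<^sup>*\<^sup>* (prepend c r i) b
        \<and> card (N (prepend c r i) \<inter> X) \<le> ladder_threshold k (Suc t)"
      unfolding ball_atLeastAtMost_Suc using Suc.prems(2)[OF \<open>R d c\<close>] \<open>R\<^sup>*\<^sup>* c b\<close> \<open>Q c\<close> r r_Q
      by (simp add: Q_def)
    show "\<forall>j\<in>{1..Suc t}. prepend e cs j \<in> X"
      unfolding ball_atLeastAtMost_Suc using cs \<open>e \<in> X'\<close> by (simp add: X'_def)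
  qed
qed

lemma card_nbhd_diff_le_ladder_threshold:
  assumes G: "simple_graph V E" and no_half_graph: "\<not> has_semi_induced_half_graph V E t"
    and walk: "(NT_adj k V E)\<^sup>*\<^sup>* u v"
  shows "card (nbhd V E u - nbhd V E v) \<le> ladder_threshold k t"
proof (rule ccontr)
  assume "\<not> ?thesis"
  moreover have "finite (nbhd V E x)" "x \<notin> nbhd V E x" for x
    using G by (auto simp: simple_graph_def nbhd_def)
  moreover have "card (sym_diff (nbhd V E x) (nbhd V E y)) \<le> k" "y \<in> V" if "NT_adj k V E x y" for x y
    using that by (auto simp: NT_adj_def near_twins_def)
  moreover have "(nbhd V E u - nbhd V E v) \<inter> nbhd V E v = {}"
    by blast
  ultimately obtain r c where "\<forall>i\<in>{1..t}. r i \<in> V" "\<forall>j\<in>{1..t}. c j \<in> nbhd V E u"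
    and "ladder (nbhd V E) t r c"
    using ladder_along_walk[of "nbhd V E" "NT_adj k V E" k V u v "nbhd V E u - nbhd V E v" t] walk
    unfolding not_le by blast
  then have "has_semi_induced_half_graph V E t"
    by (intro has_semi_induced_half_graph_if_ladder) (auto simp: nbhd_def)
  with no_half_graph show False ..
qed

theorem lemma4p5:
  shows "\<exists>h :: nat \<Rightarrow> nat \<Rightarrow> nat. \<forall>k t (V :: nat set) E u v.
           simple_graph V E \<and> \<not> has_semi_induced_half_graph V E t \<and>
           same_NT_component k V E u v
           \<longrightarrow> near_twins (h k t) V E u v"
proof (intro exI[of _ "\<lambda>k t. 2 * ladder_threshold k t"] allI impI, elim conjE)
  fix k t and V :: "nat set" and E u v
  assume G: "simple_graph V E" and no_half_graph: "\<not> has_semi_induced_half_graph V E t"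
    and "same_NT_component k V E u v"
  then have uv: "(NT_adj k V E)\<^sup>*\<^sup>* u v"
    by (simp add: same_NT_component_def)
  have "symp (NT_adj k V E)"
    by (auto simp: symp_def NT_adj_def near_twins_def Un_commute)
  with uv have vu: "(NT_adj k V E)\<^sup>*\<^sup>* v u"
    by (metis symp_rtranclp sympD)
  have "card (sym_diff (nbhd V E u) (nbhd V E v))
      \<le> card (nbhd V E u - nbhd V E v) + card (nbhd V E v - nbhd V E u)"
    by (rule card_Un_le)
  then show "near_twins (2 * ladder_threshold k t) V E u v"
    using card_nbhd_diff_le_ladder_threshold[OF G no_half_graph uv]
      card_nbhd_diff_le_ladder_threshold[OF G no_half_graph vu]
    unfolding near_twins_def by linarith
qed

end
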